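(* Let $G$ be a 2-arc-colored directed multigraph. If $C$ is a minimal PC Euler subgraph of $G$, then $C$ is a PC circuit.
   Context: $G$ has an arbitrary arc coloring $\phi:A(G)\to\{1,2\}$. Trails are directed walks without repeated arcs; a closed trail is properly colored (PC) if every two consecutive arcs, including the last and first arcs, have different colors. A (multi)digraph is PC Euler if it has a PC closed trail containing all of its arcs. A PC Euler subgraph of $G$ is a subgraph (with at least one arc) that is PC Euler; it is minimal if no proper subgraph of it is PC Euler. A PC circuit is a subgraph $C$ of $G$ that is PC Euler and satisfies $d^+_{1,C}(v)\le1$ and $d^+_{2,C}(v)\le 1$ for all $v\in V(C)$, where $d^+_{i,C}(v)$ is the number of arcs of color $i$ in $C$ leaving $v$. *)

theory Defs
  imports Main
begin

(* A directed multigraph is given by a set of arcs A :: 'b set together with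
   tail and head maps to vertices 'a; parallel arcs and loops are allowed.
   A subgraph is identified with its arc set C \<subseteq> A (its vertices being the
   endpoints of its arcs). *)

definition pc_closed_trail ::
  "('b \<Rightarrow> 'a) \<Rightarrow> ('b \<Rightarrow> 'a) \<Rightarrow> ('b \<Rightarrow> nat) \<Rightarrow> 'b list \<Rightarrow> bool" where
  "pc_closed_trail tail head phi es \<longleftrightarrow>
     es \<noteq> [] \<and> distinct es \<and>
     (\<forall>i < length es. head (es ! i) = tail (es ! ((i + 1) mod length es)) \<and>
                       phi (es ! i) \<noteq> phi (es ! ((i + 1) mod length es)))"

definition pc_euler ::
  "('b \<Rightarrow> 'a) \<Rightarrow> ('b \<Rightarrow> 'a) \<Rightarrow> ('b \<Rightarrow> nat) \<Rightarrow> 'b set \<Rightarrow> bool" where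
  "pc_euler tail head phi C \<longleftrightarrow> (\<exists>es. pc_closed_trail tail head phi es \<and> set es = C)"

definition pc_euler_subgraph ::
  "'b set \<Rightarrow> ('b \<Rightarrow> 'a) \<Rightarrow> ('b \<Rightarrow> 'a) \<Rightarrow> ('b \<Rightarrow> nat) \<Rightarrow> 'b set \<Rightarrow> bool" where
  "pc_euler_subgraph A tail head phi C \<longleftrightarrow> C \<subseteq> A \<and> C \<noteq> {} \<and> pc_euler tail head phi C"

definition minimal_pc_euler_subgraph ::
  "'b set \<Rightarrow> ('b \<Rightarrow> 'a) \<Rightarrow> ('b \<Rightarrow> 'a) \<Rightarrow> ('b \<Rightarrow> nat) \<Rightarrow> 'b set \<Rightarrow> bool" where
  "minimal_pc_euler_subgraph A tail head phi C \<longleftrightarrow>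
     pc_euler_subgraph A tail head phi C \<and>
     (\<forall>D. D \<subset> C \<longrightarrow> \<not> pc_euler_subgraph A tail head phi D)"

definition out_deg_col ::
  "('b \<Rightarrow> 'a) \<Rightarrow> ('b \<Rightarrow> nat) \<Rightarrow> 'b set \<Rightarrow> nat \<Rightarrow> 'a \<Rightarrow> nat" where
  "out_deg_col tail phi C i v = card {e \<in> C. tail e = v \<and> phi e = i}"

definition pc_circuit ::
  "'b set \<Rightarrow> ('b \<Rightarrow> 'a) \<Rightarrow> ('b \<Rightarrow> 'a) \<Rightarrow> ('b \<Rightarrow> nat) \<Rightarrow> 'b set \<Rightarrow> bool" where
  "pc_circuit A tail head phi C \<longleftrightarrow>
     pc_euler_subgraph A tail head phi C \<and>
     (\<forall>v \<in> tail ` C \<union> head ` C. out_deg_col tail phi C 1 v \<le> 1 \<and> out_deg_col tail phi C 2 v \<le> 1)"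

end

theory Submission
  imports Defs
begin

text \<open>If two arcs of a PC closed trail leave the same vertex with the same colour, the part of
  the trail from the first of them up to (excluding) the second closes up into a shorter PC closed
  trail: its last arc enters that vertex and differs in colour from the second arc, hence from the
  first. So in a minimal PC Euler subgraph each vertex has at most one outgoing arc of each
  colour.\<close>

lemma pc_closed_trail_step:
  assumes "pc_closed_trail tail head phi es" and "Suc k < length es"
  shows "head (es ! k) = tail (es ! Suc k) \<and> phi (es ! k) \<noteq> phi (es ! Suc k)"
  using assms unfolding pc_closed_trail_def
  by (metis Suc_eq_plus1 Suc_lessD mod_less)

lemma pc_closed_trail_segment:
  assumes trail: "pc_closed_trail tail head phi es"
    and ij: "i < j" "j < length es"
    and same_tail: "tail (es ! i) = tail (es ! j)"
    and same_colour: "phi (es ! i) = phi (es ! j)"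
  shows "pc_closed_trail tail head phi (take (j - i) (drop i es))"
proof -
  define ds where "ds = take (j - i) (drop i es)"
  have len: "length ds = j - i" and nth: "\<And>k. k < j - i \<Longrightarrow> ds ! k = es ! (i + k)"
    using ij by (simp_all add: ds_def)
  have next_arc: "tail (ds ! ((k + 1) mod length ds)) = tail (es ! Suc (i + k)) \<and>
                  phi (ds ! ((k + 1) mod length ds)) = phi (es ! Suc (i + k))"
    if "k < length ds" for k
  proof (cases "k + 1 < j - i")
    case True
    then show ?thesis using len nth by simp
  next
    case False
    then have "k + 1 = length ds" using that len by simp
    then have "Suc (i + k) = j" and "(k + 1) mod length ds = 0" using len ij by simp_all
    then show ?thesis using nth[of 0] ij same_tail same_colour by simp
  qed
  have "head (ds ! k) = tail (ds ! ((k + 1) mod length ds)) \<and>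
        phi (ds ! k) \<noteq> phi (ds ! ((k + 1) mod length ds))"
    if "k < length ds" for k
    using that next_arc[OF that] nth len ij pc_closed_trail_step[OF trail, of "i + k"] by simp
  moreover have "distinct ds" and "ds \<noteq> []"
    using trail ij unfolding ds_def pc_closed_trail_def by simp_all
  ultimately show ?thesis unfolding ds_def[symmetric] pc_closed_trail_def by blast
qed

lemma pc_euler_psubset_if_same_tail_colour:
  assumes "pc_euler tail head phi C"
    and "x \<in> C" "y \<in> C" "x \<noteq> y"
    and "tail x = tail y" "phi x = phi y"
  shows "\<exists>D \<subset> C. D \<noteq> {} \<and> pc_euler tail head phi D"
proof -
  obtain es where trail: "pc_closed_trail tail head phi es" and C: "set es = C"
    using assms(1) unfolding pc_euler_def by blast
  have dist: "distinct es" using trail unfolding pc_closed_trail_def by simp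
  obtain i j where ij: "i < j" "j < length es"
    and same: "tail (es ! i) = tail (es ! j)" "phi (es ! i) = phi (es ! j)"
  proof -
    obtain a b where "a < length es" "es ! a = x" "b < length es" "es ! b = y"
      using assms(2,3) C by (auto simp: in_set_conv_nth)
    moreover have "a \<noteq> b" using calculation assms(4) by auto
    ultimately show ?thesis
      using assms(5,6) that[of a b] that[of b a] by (auto simp: nat_neq_iff)
  qed
  define ds where "ds = take (j - i) (drop i es)"
  have ds_trail: "pc_closed_trail tail head phi ds"
    using pc_closed_trail_segment[OF trail ij same] by (simp add: ds_def)
  have "es ! j \<notin> set ds"
  proof
    assume "es ! j \<in> set ds"
    then obtain k where "k < j - i" "es ! (i + k) = es ! j"
      using ij by (auto simp: ds_def in_set_conv_nth)
    then show False using dist ij by (simp add: nth_eq_iff_index_eq)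
  qed
  moreover have "set ds \<subseteq> set es"
    by (metis ds_def set_drop_subset set_take_subset subset_trans)
  ultimately have "set ds \<subset> C" using ij C by force
  moreover have "set ds \<noteq> {}" using ds_trail unfolding pc_closed_trail_def by simp
  ultimately show ?thesis using ds_trail unfolding pc_euler_def by blast
qed

lemma minimal_pc_euler_subgraph_tail_colour_unique:
  assumes "minimal_pc_euler_subgraph A tail head phi C"
    and "x \<in> C" "y \<in> C" "tail x = tail y" "phi x = phi y"
  shows "x = y"
proof (rule ccontr)
  assume "x \<noteq> y"
  have "C \<subseteq> A" and "pc_euler tail head phi C"
    and no_smaller: "\<And>D. D \<subset> C \<Longrightarrow> \<not> pc_euler_subgraph A tail head phi D"
    using assms(1) unfolding minimal_pc_euler_subgraph_def pc_euler_subgraph_def by auto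
  moreover obtain D where "D \<subset> C" "D \<noteq> {}" "pc_euler tail head phi D"
    using pc_euler_psubset_if_same_tail_colour \<open>pc_euler tail head phi C\<close> assms(2-5) \<open>x \<noteq> y\<close>
    by metis
  ultimately show False unfolding pc_euler_subgraph_def by blast
qed

lemma out_deg_col_le_1:
  assumes "\<And>x y. x \<in> C \<Longrightarrow> y \<in> C \<Longrightarrow> tail x = tail y \<Longrightarrow> phi x = phi y \<Longrightarrow> x = y"
  shows "out_deg_col tail phi C i v \<le> 1"
  unfolding out_deg_col_def
proof (cases "finite {e \<in> C. tail e = v \<and> phi e = i}")
  case True
  then show "card {e \<in> C. tail e = v \<and> phi e = i} \<le> 1"
    using assms by (auto simp: card_le_Suc0_iff_eq)
qed simp

theorem corollary1:
  fixes A :: "'b set" and tail head :: "'b \<Rightarrow> 'a" and phi :: "'b \<Rightarrow> nat" and C :: "'b set"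
  assumes "finite A"
    and "\<forall>e \<in> A. phi e \<in> {1, 2}"
    and "minimal_pc_euler_subgraph A tail head phi C"
  shows "pc_circuit A tail head phi C"
proof -
  have "out_deg_col tail phi C i v \<le> 1" for i v
    using minimal_pc_euler_subgraph_tail_colour_unique[OF assms(3)] by (rule out_deg_col_le_1)
  moreover have "pc_euler_subgraph A tail head phi C"
    using assms(3) unfolding minimal_pc_euler_subgraph_def by simp
  ultimately show ?thesis unfolding pc_circuit_def by simp
qed

end
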